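(* Let $R$ be a commutative ring and $f\in R[[X]]$. Suppose $f_0=ab$ with $a,b\in R$ and $(a,b)=R$, and choose $r,s\in R$ with $ra+sb=1$. Set $g_0=0$ and, for $n\ge 1$, $g_n=f_n-rs\sum_{i=1}^{n-1}g_ig_{n-i}$. Then $g=\sum_{n\ge0}g_nX^n\in R[[X]]$ is the unique solution $g$ with $g_0=0$ of the equation $f=(a+sg)(b+rg)$, and $(a+sg,\,b+rg)=R[[X]]$.
   Context: $f_i$ denotes the coefficient of $X^i$ in $f$. *)

theory Defs
  imports "HOL-Computational_Algebra.Formal_Power_Series"
begin

function gcoeff :: "'a::comm_ring_1 \<Rightarrow> 'a \<Rightarrow> 'a fps \<Rightarrow> nat \<Rightarrow> 'a" where
  "gcoeff r s f n =
     (if n = 0 then 0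
      else fps_nth f n - r * s * (\<Sum>i\<in>{1..n-1}. gcoeff r s f i * gcoeff r s f (n - i)))"
  by auto
termination
  by (relation "measure (\<lambda>(r, s, f, n). n)") auto

definition gseries :: "'a::comm_ring_1 \<Rightarrow> 'a \<Rightarrow> 'a fps \<Rightarrow> 'a fps" where
  "gseries r s f = Abs_fps (gcoeff r s f)"

end

theory Submission
  imports Defs
begin

text \<open>Since \<open>r a + s b = 1\<close>, the product \<open>(a + s h)(b + r h)\<close> equals \<open>ab + h + rs h\<^sup>2\<close>.
  For \<open>h\<^sub>0 = 0\<close> the \<open>n\<close>-th coefficient of \<open>h\<^sup>2\<close> only involves \<open>h\<^sub>1, \<dots>, h\<^sub>n\<^sub>-\<^sub>1\<close>, so comparing
  coefficients of \<open>f = ab + h + rs h\<^sup>2\<close> is exactly the recursion defining \<open>g\<close>; this gives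
  existence and, by strong induction, uniqueness. Finally \<open>r(a + s g) + s(b + r g)\<close> has constant
  term \<open>1\<close>, hence is a unit of \<open>R[[X]]\<close>, which makes the two factors comaximal.\<close>

declare gcoeff.simps [simp del]

lemma fps_nth_square_of_nth_0_eq_0:
  fixes h :: "'a::comm_ring_1 fps"
  assumes "fps_nth h 0 = 0" and "n \<ge> 1"
  shows "fps_nth (h\<^sup>2) n = (\<Sum>i\<in>{1..n-1}. fps_nth h i * fps_nth h (n - i))"
proof -
  obtain m where n: "n = Suc m" using assms(2) by (cases n) auto
  have "fps_nth (h\<^sup>2) n = (\<Sum>i=0..n. fps_nth h i * fps_nth h (n - i))"
    by (simp add: power2_eq_square fps_mult_nth)
  also have "\<dots> = fps_nth h 0 * fps_nth h n + (\<Sum>i=1..n. fps_nth h i * fps_nth h (n - i))"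
    by (subst sum.atLeast_Suc_atMost) simp_all
  also have "(\<Sum>i=1..n. fps_nth h i * fps_nth h (n - i))
      = (\<Sum>i=1..m. fps_nth h i * fps_nth h (n - i)) + fps_nth h n * fps_nth h 0"
    unfolding n by (subst sum.cl_ivl_Suc) simp
  finally show ?thesis using assms n by simp
qed

lemma fps_nth_add_square_of_nth_0_eq_0:
  fixes h :: "'a::comm_ring_1 fps"
  assumes "fps_nth h 0 = 0" and "n \<ge> 1"
  shows "fps_nth (h + fps_const c * h\<^sup>2) n
      = fps_nth h n + c * (\<Sum>i\<in>{1..n-1}. fps_nth h i * fps_nth h (n - i))"
  using assms by (simp add: fps_nth_square_of_nth_0_eq_0)

lemma add_square_inj_on_nth_0_eq_0:
  fixes h k :: "'a::comm_ring_1 fps"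
  assumes h0: "fps_nth h 0 = 0" and k0: "fps_nth k 0 = 0"
    and eq: "h + fps_const c * h\<^sup>2 = k + fps_const c * k\<^sup>2"
  shows "h = k"
proof (rule fps_ext)
  fix n show "fps_nth h n = fps_nth k n"
  proof (induction n rule: less_induct)
    case (less n)
    show ?case
    proof (cases "n = 0")
      case True
      then show ?thesis using h0 k0 by simp
    next
      case False
      then have n: "n \<ge> 1" by simp
      have "(\<Sum>i\<in>{1..n-1}. fps_nth h i * fps_nth h (n - i))
          = (\<Sum>i\<in>{1..n-1}. fps_nth k i * fps_nth k (n - i))"
        by (rule sum.cong) (auto intro!: arg_cong2[where f = "(*)"] less.IH)
      moreover have "fps_nth (h + fps_const c * h\<^sup>2) n = fps_nth (k + fps_const c * k\<^sup>2) n"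
        using eq by simp
      ultimately show ?thesis
        using fps_nth_add_square_of_nth_0_eq_0[OF h0 n] fps_nth_add_square_of_nth_0_eq_0[OF k0 n]
        by simp
    qed
  qed
qed

lemma linear_factors_mult_eq:
  fixes h :: "'a::comm_ring_1 fps"
  assumes "r * a + s * b = 1"
  shows "(fps_const a + fps_const s * h) * (fps_const b + fps_const r * h)
       = fps_const (a * b) + (h + fps_const (r * s) * h\<^sup>2)"
proof -
  have "(fps_const a + fps_const s * h) * (fps_const b + fps_const r * h)
      = fps_const (a * b) + fps_const (r * a + s * b) * h + fps_const (r * s) * h\<^sup>2"
    by (simp add: algebra_simps power2_eq_square flip: fps_const_mult fps_const_add)
  then show ?thesis using assms by simp
qed

lemma fps_linear_combination_eq_1:
  fixes A B x y :: "'a::comm_ring_1 fps"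
  assumes "fps_nth (x * A + y * B) 0 * c = 1"
  shows "\<exists>u v. u * A + v * B = 1"
proof -
  define q where "q = fps_right_inverse (x * A + y * B) c"
  have "(x * A + y * B) * q = 1"
    unfolding q_def using assms by (rule fps_right_inverse)
  then have "(q * x) * A + (q * y) * B = 1"
    by (simp add: algebra_simps)
  then show ?thesis by blast
qed

lemma fps_nth_gseries_0: "fps_nth (gseries r s f) 0 = 0"
  unfolding gseries_def fps_nth_Abs_fps by (subst gcoeff.simps) simp

lemma fps_nth_gseries:
  assumes "n \<ge> 1"
  shows "fps_nth (gseries r s f) n = fps_nth f n
      - r * s * (\<Sum>i\<in>{1..n-1}. fps_nth (gseries r s f) i * fps_nth (gseries r s f) (n - i))"
  unfolding gseries_def fps_nth_Abs_fps using assms by (subst gcoeff.simps) simp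

lemma gseries_add_square:
  fixes f :: "'a::comm_ring_1 fps"
  shows "f = fps_const (fps_nth f 0) + (gseries r s f + fps_const (r * s) * (gseries r s f)\<^sup>2)"
proof (rule fps_ext)
  fix n
  show "fps_nth f n
      = fps_nth (fps_const (fps_nth f 0) + (gseries r s f + fps_const (r * s) * (gseries r s f)\<^sup>2)) n"
  proof (cases "n = 0")
    case True
    then show ?thesis by (simp add: fps_nth_gseries_0 power2_eq_square)
  next
    case False
    then have n: "n \<ge> 1" by simp
    show ?thesis
      using n by (simp add: fps_nth_square_of_nth_0_eq_0[OF fps_nth_gseries_0 n] fps_nth_gseries[OF n])
  qed
qed

theorem proposition2p2:
  fixes f :: "'a::comm_ring_1 fps" and a b r s :: 'a
  assumes "fps_nth f 0 = a * b"
    and "r * a + s * b = 1"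
  defines "g \<equiv> gseries r s f"
  shows "fps_nth g 0 = 0
    \<and> f = (fps_const a + fps_const s * g) * (fps_const b + fps_const r * g)
    \<and> (\<forall>h :: 'a fps. fps_nth h 0 = 0
          \<and> f = (fps_const a + fps_const s * h) * (fps_const b + fps_const r * h) \<longrightarrow> h = g)
    \<and> (\<exists>u v :: 'a fps. u * (fps_const a + fps_const s * g) + v * (fps_const b + fps_const r * g) = 1)"
proof -
  have g0: "fps_nth g 0 = 0"
    unfolding g_def by (rule fps_nth_gseries_0)
  have solves: "f = (fps_const a + fps_const s * g) * (fps_const b + fps_const r * g)"
    using gseries_add_square[of f r s] assms by (simp add: linear_factors_mult_eq)
  have unique: "h = g"
    if "fps_nth h 0 = 0" and "f = (fps_const a + fps_const s * h) * (fps_const b + fps_const r * h)"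
    for h
  proof (rule add_square_inj_on_nth_0_eq_0[OF that(1) g0])
    show "h + fps_const (r * s) * h\<^sup>2 = g + fps_const (r * s) * g\<^sup>2"
      using that(2) solves unfolding linear_factors_mult_eq[OF assms(2)] by (metis add_left_cancel)
  qed
  have "fps_nth (fps_const r * (fps_const a + fps_const s * g)
      + fps_const s * (fps_const b + fps_const r * g)) 0 * 1 = 1"
    using g0 assms(2) by simp
  then have comaximal:
    "\<exists>u v. u * (fps_const a + fps_const s * g) + v * (fps_const b + fps_const r * g) = 1"
    by (rule fps_linear_combination_eq_1)
  show ?thesis using g0 solves unique comaximal by blast
qed

end
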